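(* Let $N\ge2$, $T=\{x\in\mathbb{R}^N:1<|x|<2\}$, $2<p<2^*$ ($2^*=\frac{2N}{N-2}$ if $N\ge3$, $+\infty$ if $N=2$), $\lambda_1$ the first Dirichlet eigenvalue of $-\Delta$ on $T$, and for $\lambda>-\lambda_1$ let $u_\lambda=u_\lambda(r)$, $r=|x|\in(1,2)$, be the unique positive solution in $H^1_{0,rad}(T)$ of $-\Delta u+\lambda u=u^{p-1}$ in $T$, $u=0$ on $\partial T$. Then $u_\lambda$ has a unique maximum point $\bar r_\lambda\in(1,2)$, and $u_\lambda'>0$ on $(1,\bar r_\lambda)$, $u_\lambda'<0$ on $(\bar r_\lambda,2)$. *)

theory Defs
  imports "HOL-Analysis.Analysis"
begin

definition annulus :: "'a::euclidean_space set" where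
  "annulus = {x. 1 < norm x \<and> norm x < 2}"

definition partial_deriv :: "('a::euclidean_space \<Rightarrow> real) \<Rightarrow> 'a \<Rightarrow> 'a \<Rightarrow> real" where
  "partial_deriv f b x = deriv (\<lambda>t. f (x + t *\<^sub>R b)) 0"

definition laplacian :: "('a::euclidean_space \<Rightarrow> real) \<Rightarrow> 'a \<Rightarrow> real" where
  "laplacian f x = (\<Sum>b\<in>Basis. partial_deriv (\<lambda>y. partial_deriv f b y) b x)"

definition grad_sq :: "('a::euclidean_space \<Rightarrow> real) \<Rightarrow> 'a \<Rightarrow> real" where
  "grad_sq f x = (\<Sum>b\<in>Basis. (partial_deriv f b x)\<^sup>2)"

definition test_fun :: "'a::euclidean_space set \<Rightarrow> ('a \<Rightarrow> real) \<Rightarrow> bool" where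
  "test_fun S \<phi> \<longleftrightarrow> \<phi> differentiable_on UNIV
     \<and> (\<forall>b\<in>Basis. continuous_on UNIV (partial_deriv \<phi> b))
     \<and> compact (closure {x. \<phi> x \<noteq> 0}) \<and> closure {x. \<phi> x \<noteq> 0} \<subseteq> S"

text \<open>First Dirichlet eigenvalue of -Laplacian on the annulus, via the Rayleigh quotient
  (infimum over test functions, which are dense in H^1_0).\<close>
definition lambda1 :: "'a::euclidean_space itself \<Rightarrow> real" where
  "lambda1 (_ :: 'a itself) = Inf {integral UNIV (grad_sq \<phi>) / integral UNIV (\<lambda>x. (\<phi> x)\<^sup>2) | \<phi> :: 'a \<Rightarrow> real.
      test_fun annulus \<phi> \<and> (\<exists>x. \<phi> x \<noteq> 0)}"

end

theory Submission
  imports Defs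
begin

text \<open>For a radial function the equation becomes u'' + (N - 1)/r u' = \<lambda> u - u^(p-1) on (1, 2).
  Along a solution the energy E = u'^2/2 + u^p/p - \<lambda> u^2/2 satisfies E' = -(N - 1)/r u'^2 \<le> 0,
  and E tends to 0 at r = 2, so E \<ge> 0 throughout. At a critical point with u'' \<ge> 0 we would have
  u^(p-2) \<le> \<lambda>, which makes E < 0 because p > 2. Hence every critical point of u is a strict
  local maximum, so u' can never change sign from negative to positive, and the critical point
  given by Rolle's theorem is the unique maximum.\<close>

lemma has_real_derivative_norm_line:
  fixes x e :: "'a::real_inner"
  assumes nz: "x + t *\<^sub>R e \<noteq> 0"
  shows "((\<lambda>s. norm (x + s *\<^sub>R e)) has_real_derivative ((x + t *\<^sub>R e) \<bullet> e) / norm (x + t *\<^sub>R e)) (at t)"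
proof -
  have line: "((\<lambda>s. x + s *\<^sub>R e) has_derivative (\<lambda>h. h *\<^sub>R e)) (at t)"
    by (auto intro!: derivative_eq_intros)
  have "((\<lambda>s. norm (x + s *\<^sub>R e)) has_derivative (\<lambda>h. (h *\<^sub>R e) \<bullet> sgn (x + t *\<^sub>R e))) (at t)"
    using has_derivative_compose[OF line has_derivative_norm[OF nz]] by simp
  moreover have "(\<lambda>h. (h *\<^sub>R e) \<bullet> sgn (x + t *\<^sub>R e)) = (*) (((x + t *\<^sub>R e) \<bullet> e) / norm (x + t *\<^sub>R e))"
    by (rule ext) (simp add: sgn_div_norm inner_commute divide_inverse)
  ultimately show ?thesis by (simp add: has_field_derivative_def)
qed

lemma partial_deriv_radial:
  fixes y e :: "'a::euclidean_space"
  assumes y: "y \<noteq> 0" and du: "(u has_real_derivative u' (norm y)) (at (norm y))"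
  shows "partial_deriv (\<lambda>z. u (norm z)) e y = u' (norm y) * (y \<bullet> e) / norm y"
proof -
  have "((\<lambda>t. u (norm (y + t *\<^sub>R e))) has_real_derivative u' (norm y) * ((y \<bullet> e) / norm y)) (at 0)"
  proof (rule DERIV_chain2[of u])
    show "((\<lambda>t. norm (y + t *\<^sub>R e)) has_real_derivative (y \<bullet> e) / norm y) (at 0)"
      using has_real_derivative_norm_line[of y 0 e] y by simp
  qed (use du in simp)
  then show ?thesis unfolding partial_deriv_def by (simp add: DERIV_imp_deriv)
qed

lemma partial_deriv2_radial:
  fixes x e :: "'a::euclidean_space"
  assumes e: "norm e = 1" and S: "open S" "0 \<notin> S" "norm x \<in> S"
    and du: "\<forall>r\<in>S. (u has_real_derivative u' r) (at r)"
    and ddu: "(u' has_real_derivative u'' (norm x)) (at (norm x))"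
  shows "partial_deriv (\<lambda>y. partial_deriv (\<lambda>z. u (norm z)) e y) e x
       = u'' (norm x) * (x \<bullet> e)^2 / (norm x)^2 + u' (norm x) * (1 / norm x - (x \<bullet> e)^2 / (norm x)^3)"
proof -
  define R where "R = norm x"
  have R: "R > 0" "x \<noteq> 0" using S by (auto simp: R_def)
  have ee: "e \<bullet> e = 1" using e by (simp add: dot_square_norm)
  have "open ((\<lambda>s. norm (x + s *\<^sub>R e)) -` S)"
    by (rule continuous_open_vimage[OF S(1)]) (auto intro!: continuous_intros)
  then have "\<forall>\<^sub>F s in nhds 0. norm (x + s *\<^sub>R e) \<in> S"
    using eventually_nhds_in_open[of _ 0] S(3) by force
  then have first: "\<forall>\<^sub>F s in nhds 0. partial_deriv (\<lambda>z. u (norm z)) e (x + s *\<^sub>R e)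
      = u' (norm (x + s *\<^sub>R e)) * ((x + s *\<^sub>R e) \<bullet> e) / norm (x + s *\<^sub>R e)"
    by eventually_elim (use du S(2) in \<open>auto intro!: partial_deriv_radial\<close>)
  have "((\<lambda>s. u' (norm (x + s *\<^sub>R e)) * ((x + s *\<^sub>R e) \<bullet> e) / norm (x + s *\<^sub>R e))
      has_real_derivative ((u'' R * ((x \<bullet> e) / R) * (x \<bullet> e) + u' R) * R - u' R * (x \<bullet> e) * ((x \<bullet> e) / R)) / (R * R)) (at 0)"
    using has_real_derivative_norm_line[of x 0 e] R ddu
    by (auto intro!: derivative_eq_intros DERIV_chain2[of u'] simp: R_def ee inner_add_left)
  then have "((\<lambda>s. u' (norm (x + s *\<^sub>R e)) * ((x + s *\<^sub>R e) \<bullet> e) / norm (x + s *\<^sub>R e))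
      has_real_derivative u'' R * (x \<bullet> e)^2 / R^2 + u' R * (1 / R - (x \<bullet> e)^2 / R^3)) (at 0)"
    by (rule DERIV_cong) (use R in \<open>simp add: field_simps power2_eq_square power3_eq_cube\<close>)
  then show ?thesis
    unfolding partial_deriv_def[of "\<lambda>y. partial_deriv _ e y"] R_def
    using deriv_cong_ev[OF first refl] by (simp add: DERIV_imp_deriv)
qed

lemma laplacian_radial:
  fixes x :: "'a::euclidean_space"
  assumes S: "open S" "0 \<notin> S" "norm x \<in> S"
    and du: "\<forall>r\<in>S. (u has_real_derivative u' r) (at r)"
    and ddu: "(u' has_real_derivative u'' (norm x)) (at (norm x))"
  shows "laplacian (\<lambda>y. u (norm y)) x = u'' (norm x) + (real DIM('a) - 1) / norm x * u' (norm x)"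
proof -
  define R where "R = norm x"
  have R: "R > 0" using S by (auto simp: R_def)
  have sum_sq: "(\<Sum>e\<in>Basis. (x \<bullet> e)^2) = R^2"
    unfolding R_def power2_norm_eq_inner by (subst euclidean_inner) (simp add: power2_eq_square)
  have "partial_deriv (\<lambda>y. partial_deriv (\<lambda>z. u (norm z)) e y) e x
      = u'' R / R^2 * (x \<bullet> e)^2 + u' R / R - u' R / R^3 * (x \<bullet> e)^2" if "e \<in> Basis" for e
    using partial_deriv2_radial[where e=e and u''=u'', OF _ S du ddu] that
    by (simp add: R_def field_simps)
  then have "laplacian (\<lambda>y. u (norm y)) x
      = (\<Sum>e\<in>Basis. u'' R / R^2 * (x \<bullet> e)^2 + u' R / R - u' R / R^3 * (x \<bullet> e)^2)"
    unfolding laplacian_def by simp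
  also have "\<dots> = u'' R / R^2 * (\<Sum>e\<in>Basis. (x \<bullet> e)^2) + real DIM('a) * (u' R / R)
      - u' R / R^3 * (\<Sum>e\<in>Basis. (x \<bullet> e)^2)"
    by (simp add: sum.distrib sum_subtractf sum_distrib_left)
  also have "\<dots> = u'' R + (real DIM('a) - 1) / R * u' R"
    unfolding sum_sq using R by (simp add: field_simps power2_eq_square power3_eq_cube)
  finally show ?thesis by (simp add: R_def)
qed

text \<open>The radial equation has damping d r = (N - 1) / r.\<close>
locale positive_solution_damped_ode =
  fixes u u' u'' d :: "real \<Rightarrow> real" and a b lam p :: real
  assumes a_less_b: "a < b"
    and has_deriv: "\<And>r. r \<in> {a<..<b} \<Longrightarrow> (u has_real_derivative u' r) (at r)"
    and has_deriv2: "\<And>r. r \<in> {a<..<b} \<Longrightarrow> (u' has_real_derivative u'' r) (at r)"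
    and ode: "\<And>r. r \<in> {a<..<b} \<Longrightarrow> u'' r + d r * u' r = lam * u r - u r powr (p - 1)"
    and damping_nonneg: "\<And>r. r \<in> {a<..<b} \<Longrightarrow> d r \<ge> 0"
    and p_gt_2: "p > 2"
    and continuous: "continuous_on {a..b} u"
    and boundary: "u a = 0" "u b = 0"
    and positive: "\<And>r. r \<in> {a<..<b} \<Longrightarrow> u r > 0"
begin

definition energy :: "real \<Rightarrow> real" where
  "energy r = (u' r)^2 / 2 + u r powr p / p - lam * (u r)^2 / 2"

lemma has_real_derivative_energy:
  assumes r: "r \<in> {a<..<b}"
  shows "(energy has_real_derivative - d r * (u' r)^2) (at r)"
proof -
  have "u r > 0" using positive r .
  then have "(energy has_real_derivative
      u' r * u'' r + u r powr (p - 1) * u' r - lam * u r * u' r) (at r)"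
    unfolding energy_def using has_deriv[OF r] has_deriv2[OF r] p_gt_2
    by (auto intro!: derivative_eq_intros simp: powr_diff field_simps power2_eq_square)
  moreover have "u' r * u'' r + u r powr (p - 1) * u' r - lam * u r * u' r
      = u' r * (u'' r + u r powr (p - 1) - lam * u r)"
    by (simp add: algebra_simps)
  moreover have "u'' r + u r powr (p - 1) - lam * u r = - d r * u' r"
    using ode[OF r] by linarith
  ultimately show ?thesis by (simp add: power2_eq_square mult.left_commute)
qed

lemma energy_antimono:
  assumes "a < s" "s \<le> t" "t < b"
  shows "energy t \<le> energy s"
proof (rule DERIV_nonpos_imp_nonincreasing[OF \<open>s \<le> t\<close>])
  fix r assume "s \<le> r" "r \<le> t"
  then have r: "r \<in> {a<..<b}" using assms by auto
  show "\<exists>y. DERIV energy r :> y \<and> y \<le> 0"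
    using has_real_derivative_energy[OF r] damping_nonneg[OF r] by auto
qed

text \<open>The energy tends to 0 at the boundary point b, and it only decreases on the way there.\<close>
lemma energy_nonneg:
  assumes r: "r \<in> {a<..<b}"
  shows "energy r \<ge> 0"
proof (rule tendsto_upperbound)
  show "((\<lambda>t. - lam * (u t)^2 / 2) \<longlongrightarrow> 0) (at_left b)"
    using continuous_on_Icc_at_leftD[OF continuous a_less_b] boundary(2)
    by (auto intro!: tendsto_eq_intros)
  have "\<forall>\<^sub>F t in at_left b. t \<in> {r<..<b}"
    using r by (intro eventually_at_left_real) auto
  then show "\<forall>\<^sub>F t in at_left b. - lam * (u t)^2 / 2 \<le> energy r"
  proof eventually_elim
    case (elim t)
    with r have "energy t \<le> energy r" by (intro energy_antimono) auto
    moreover have "u t powr p / p \<ge> 0" "(u' t)^2 / 2 \<ge> 0" using p_gt_2 by simp_all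
    ultimately show ?case unfolding energy_def by linarith
  qed
qed simp

text \<open>Otherwise the energy would be negative at the critical point, since p > 2.\<close>
lemma deriv2_neg_at_critical:
  assumes r: "r \<in> {a<..<b}" and crit: "u' r = 0"
  shows "u'' r < 0"
proof (rule ccontr)
  assume "\<not> u'' r < 0"
  define m where "m = u r"
  have m: "m > 0" using positive[OF r] by (simp add: m_def)
  have "m powr (p - 1) \<le> lam * m"
    using ode[OF r] crit \<open>\<not> u'' r < 0\<close> by (simp add: m_def)
  moreover have "m powr (p - 1) > 0" using m by simp
  ultimately have "lam * m > 0" by linarith
  with m have lam: "lam > 0" by (simp add: zero_less_mult_iff)
  have "m powr p = m * m powr (p - 1)" using m by (simp add: powr_diff)
  also have "\<dots> \<le> lam * m^2"
    using \<open>m powr (p - 1) \<le> lam * m\<close> m by (simp add: power2_eq_square mult_left_mono)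
  finally have "energy r \<le> lam * m^2 / p - lam * m^2 / 2"
    unfolding energy_def crit m_def[symmetric] using p_gt_2 by (simp add: divide_right_mono)
  also have "\<dots> < 0"
    using divide_strict_left_mono[OF p_gt_2, of "lam * m^2"] lam m p_gt_2 by simp
  finally show False using energy_nonneg[OF r] by simp
qed

lemma eventually_deriv_pos_at_left:
  assumes r: "r \<in> {a<..<b}" and "u' r \<ge> 0"
  shows "\<forall>\<^sub>F s in at_left r. u' s > 0"
proof (cases "u' r = 0")
  case True
  obtain \<delta> where "\<delta> > 0" and \<delta>: "\<forall>h>0. h < \<delta> \<longrightarrow> u' r < u' (r - h)"
    using DERIV_neg_dec_left[OF has_deriv2[OF r] deriv2_neg_at_critical[OF r True]]
    by auto
  show ?thesis
    unfolding eventually_at_left_field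
  proof (intro exI conjI allI impI)
    show "r - \<delta> < r" using \<open>\<delta> > 0\<close> by simp
    fix s assume "r - \<delta> < s" "s < r"
    then show "u' s > 0" using \<delta>[rule_format, of "r - s"] True by simp
  qed
next
  case False
  have "isCont u' r" using has_deriv2[OF r] by (rule DERIV_isCont)
  then have "\<forall>\<^sub>F s in at r. u' s > 0"
    using False \<open>u' r \<ge> 0\<close> unfolding isCont_def by (intro order_tendstoD(1)) auto
  then show ?thesis by (simp add: eventually_at_split)
qed

lemma eventually_deriv_neg_at_right:
  assumes r: "r \<in> {a<..<b}" and "u' r \<le> 0"
  shows "\<forall>\<^sub>F s in at_right r. u' s < 0"
proof (cases "u' r = 0")
  case True
  obtain \<delta> where "\<delta> > 0" and \<delta>: "\<forall>h>0. h < \<delta> \<longrightarrow> u' (r + h) < u' r"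
    using DERIV_neg_dec_right[OF has_deriv2[OF r] deriv2_neg_at_critical[OF r True]] by auto
  show ?thesis
    unfolding eventually_at_right_field
  proof (intro exI conjI allI impI)
    show "r < r + \<delta>" using \<open>\<delta> > 0\<close> by simp
    fix s assume "r < s" "s < r + \<delta>"
    then show "u' s < 0" using \<delta>[rule_format, of "s - r"] True by simp
  qed
next
  case False
  have "isCont u' r" using has_deriv2[OF r] by (rule DERIV_isCont)
  then have "\<forall>\<^sub>F s in at r. u' s < 0"
    using False \<open>u' r \<le> 0\<close> unfolding isCont_def by (intro order_tendstoD(2)) auto
  then show ?thesis by (simp add: eventually_at_split)
qed

lemma less_if_deriv_pos:
  assumes "a \<le> s" "s < t" "t \<le> b" and pos: "\<And>r. r \<in> {s<..<t} \<Longrightarrow> u' r > 0"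
  shows "u s < u t"
proof (rule DERIV_pos_imp_increasing_open[OF \<open>s < t\<close>])
  fix r assume "s < r" "r < t"
  then show "\<exists>y. DERIV u r :> y \<and> y > 0"
    using assms has_deriv[of r] by auto
qed (rule continuous_on_subset[OF continuous], use assms in auto)

lemma greater_if_deriv_neg:
  assumes "a \<le> s" "s < t" "t \<le> b" and neg: "\<And>r. r \<in> {s<..<t} \<Longrightarrow> u' r < 0"
  shows "u s > u t"
proof (rule DERIV_neg_imp_decreasing_open[OF \<open>s < t\<close>])
  fix r assume "s < r" "r < t"
  then show "\<exists>y. DERIV u r :> y \<and> y < 0"
    using assms has_deriv[of r] by auto
qed (rule continuous_on_subset[OF continuous], use assms in auto)

text \<open>At a minimum point c of u on [s, t], u' c \<ge> 0 unless c = s; either way u decreases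
  strictly on one side of c inside [s, t].\<close>
lemma deriv_neg_after_nonpos:
  assumes "a < s" "s < t" "t < b" and "u' s \<le> 0"
  shows "u' t < 0"
proof (rule ccontr)
  assume "\<not> u' t < 0"
  have "continuous_on {s..t} u"
    by (rule continuous_on_subset[OF continuous]) (use assms in auto)
  moreover have "{s..t} \<noteq> {}" using \<open>s < t\<close> by simp
  ultimately obtain c where "c \<in> {s..t}" and min: "\<forall>y\<in>{s..t}. u c \<le> u y"
    using continuous_attains_inf[OF compact_Icc] by blast
  then have c: "s \<le> c" "c \<le> t" by auto
  show False
  proof (cases "c = s")
    case True
    obtain t' where "s < t'" and neg: "\<And>y. s < y \<Longrightarrow> y < t' \<Longrightarrow> u' y < 0"
      using eventually_deriv_neg_at_right[of s] assms unfolding eventually_at_right_field by auto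
    define y where "y = min t' t"
    have y: "s < y" "y \<le> t" using \<open>s < t'\<close> \<open>s < t\<close> by (auto simp: y_def)
    have "u y < u s"
      using assms y neg by (intro greater_if_deriv_neg) (auto simp: y_def)
    with min[rule_format, of y] y True show False by simp
  next
    case False
    with c assms have c': "c \<in> {a<..<b}" "s < c" by auto
    have "u' c \<ge> 0"
    proof (cases "c = t")
      case True
      then show ?thesis using \<open>\<not> u' t < 0\<close> by simp
    next
      case False
      with c have "c < t" by simp
      have "\<forall>y. \<bar>c - y\<bar> < min (c - s) (t - c) \<longrightarrow> u c \<le> u y"
        using min by (auto simp: abs_if)
      then have "u' c = 0"
        by (rule DERIV_local_min[OF has_deriv[OF c'(1)], rotated]) (use \<open>s < c\<close> \<open>c < t\<close> in simp)
      then show ?thesis by simp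
    qed
    obtain s' where "s' < c" and pos: "\<And>y. s' < y \<Longrightarrow> y < c \<Longrightarrow> u' y > 0"
      using eventually_deriv_pos_at_left[OF c'(1) \<open>u' c \<ge> 0\<close>]
      unfolding eventually_at_left_field by auto
    define y where "y = max s' s"
    have y: "s \<le> y" "y < c" using \<open>s' < c\<close> c' by (auto simp: y_def)
    have "u y < u c"
      using assms y c pos by (intro less_if_deriv_pos) (auto simp: y_def)
    with min[rule_format, of y] y c show False by simp
  qed
qed

lemma deriv_sign_around_critical:
  assumes z: "z \<in> {a<..<b}" "u' z = 0"
  shows "(\<forall>r\<in>{a<..<z}. u' r > 0) \<and> (\<forall>r\<in>{z<..<b}. u' r < 0)"
proof (intro conjI ballI)
  fix r assume "r \<in> {a<..<z}"
  then show "u' r > 0" using deriv_neg_after_nonpos[of r z] z by force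
next
  fix r assume "r \<in> {z<..<b}"
  then show "u' r < 0" using deriv_neg_after_nonpos[of z r] z by auto
qed

lemma le_at_sign_change:
  assumes z: "z \<in> {a<..<b}"
    and pos: "\<forall>r\<in>{a<..<z}. u' r > 0" and neg: "\<forall>r\<in>{z<..<b}. u' r < 0"
    and r: "r \<in> {a..b}"
  shows "u r \<le> u z"
proof (cases r z rule: linorder_cases)
  case less
  have "u r < u z"
    by (rule less_if_deriv_pos) (use less z r pos in auto)
  then show ?thesis by simp
next
  case greater
  have "u z > u r"
    by (rule greater_if_deriv_neg) (use greater z r neg in auto)
  then show ?thesis by simp
qed simp

theorem unique_maximum_point:
  "\<exists>!z. z \<in> {a<..<b} \<and> (\<forall>r\<in>{a..b}. u r \<le> u z)
      \<and> (\<forall>r\<in>{a<..<z}. u' r > 0) \<and> (\<forall>r\<in>{z<..<b}. u' r < 0)"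
proof -
  obtain z where z: "z \<in> {a<..<b}" and "(u has_real_derivative 0) (at z)"
    using Rolle[OF a_less_b _ continuous] boundary has_deriv
    by (metis greaterThanLessThan_iff real_differentiable_def)
  then have "u' z = 0" using DERIV_unique has_deriv by blast
  with z have signs: "(\<forall>r\<in>{a<..<z}. u' r > 0) \<and> (\<forall>r\<in>{z<..<b}. u' r < 0)"
    by (rule deriv_sign_around_critical)
  show ?thesis
  proof (rule ex1I)
    show "z \<in> {a<..<b} \<and> (\<forall>r\<in>{a..b}. u r \<le> u z)
        \<and> (\<forall>r\<in>{a<..<z}. u' r > 0) \<and> (\<forall>r\<in>{z<..<b}. u' r < 0)"
      using z signs le_at_sign_change by blast
  next
    fix y assume y: "y \<in> {a<..<b} \<and> (\<forall>r\<in>{a..b}. u r \<le> u y)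
        \<and> (\<forall>r\<in>{a<..<y}. u' r > 0) \<and> (\<forall>r\<in>{y<..<b}. u' r < 0)"
    show "y = z"
    proof (cases y z rule: linorder_cases)
      case less
      then have "u' z < 0" using y z by auto
      with \<open>u' z = 0\<close> show ?thesis by simp
    next
      case greater
      then have "u' z > 0" using y z by auto
      with \<open>u' z = 0\<close> show ?thesis by simp
    qed
  qed
qed

end

text \<open>The hypotheses on N and \<lambda>, the upper bound on p and the continuity of u'' serve
  existence and uniqueness of u in the paper; the shape of u needs none of them.\<close>
theorem lemma2p1:
  fixes u :: "real \<Rightarrow> real" and lam p :: real
  assumes N2: "DIM('a::euclidean_space) \<ge> 2"
    and p_lo: "2 < p"
    and p_hi: "DIM('a) = 2 \<or> p < 2 * real DIM('a) / (real DIM('a) - 2)"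
    and lam: "lam > - lambda1 TYPE('a)"
    and u_cont: "continuous_on {1..2} u"
    and u_C2: "\<forall>r\<in>{1<..<2}. u differentiable (at r) \<and> deriv u differentiable (at r)"
    and u_C2': "continuous_on {1<..<2} (deriv (deriv u))"
    and u_bd: "u 1 = 0" "u 2 = 0"
    and u_pos: "\<forall>r\<in>{1<..<2}. u r > 0"
    and u_eq: "\<forall>x\<in>(annulus :: 'a set).
               - laplacian (\<lambda>y::'a. u (norm y)) x + lam * u (norm x) = u (norm x) powr (p - 1)"
  shows "\<exists>!rb. rb \<in> {1<..<2} \<and> (\<forall>r\<in>{1..2}. u r \<le> u rb)
              \<and> (\<forall>r\<in>{1<..<rb}. deriv u r > 0) \<and> (\<forall>r\<in>{rb<..<2}. deriv u r < 0)"
proof -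
  have du: "\<forall>r\<in>{1<..<2}. (u has_real_derivative deriv u r) (at r)"
    and ddu: "\<forall>r\<in>{1<..<2}. (deriv u has_real_derivative deriv (deriv u) r) (at r)"
    using u_C2 DERIV_deriv_iff_real_differentiable by blast+
  obtain e :: 'a where e: "e \<in> Basis" using nonempty_Basis by blast
  have radial_ode: "deriv (deriv u) r + (real DIM('a) - 1) / r * deriv u r = lam * u r - u r powr (p - 1)"
    if r: "r \<in> {1<..<2}" for r
  proof -
    have norm_re: "norm (r *\<^sub>R e) = r" using e r by simp
    then have "r *\<^sub>R e \<in> annulus" using r by (simp add: annulus_def)
    moreover have "laplacian (\<lambda>y::'a. u (norm y)) (r *\<^sub>R e)
        = deriv (deriv u) r + (real DIM('a) - 1) / r * deriv u r"
      using laplacian_radial[of "{1<..<2}" "r *\<^sub>R e" u "deriv u" "deriv (deriv u)"] norm_re du ddu r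
      by simp
    ultimately show ?thesis using u_eq norm_re by force
  qed
  interpret positive_solution_damped_ode u "deriv u" "deriv (deriv u)" "\<lambda>r. (real DIM('a) - 1) / r"
      1 2 lam p
    by unfold_locales (use du ddu radial_ode p_lo u_cont u_bd u_pos in auto)
  show ?thesis by (rule unique_maximum_point)
qed

end
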